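(* Let $\mathcal{A}\in\{0,1\}^{N\times N}$ be the (symmetric) adjacency matrix of an undirected graph. Let $\mathcal{S}_{\mathcal{A}}=\{M\in\mathbb{C}^{N\times N}: M^T=-M,\ M_{ij}=0\text{ whenever }\mathcal{A}_{ij}=0\}$, equipped with the Frobenius inner product $\langle M_1,M_2\rangle=\operatorname{tr}(M_1^*M_2)$, and $\mathbb{C}^N$ with the standard inner product. Define $\mathcal{L}_{\mathcal{A}}:\mathcal{S}_{\mathcal{A}}\to\mathbb{C}^N$ by $\mathcal{L}_{\mathcal{A}}(M)=M\mathbb{1}$, with adjoint $\mathcal{L}_{\mathcal{A}}^\dagger$. Then $\mathcal{L}_{\mathcal{A}}\mathcal{L}_{\mathcal{A}}^\dagger=\frac12 L$, where $L=\operatorname{diag}(\mathcal{A}\mathbb{1})-\mathcal{A}$ is the Laplacian of the graph.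
   Context: $\mathbb{1}$ is the all-ones vector; $\operatorname{diag}(v)$ is the diagonal matrix with the entries of $v$ on its diagonal; $M^T$ denotes transpose (not conjugate transpose). *)

theory Defs
  imports "HOL-Analysis.Analysis"
begin

definition ones :: "'a::one ^ 'n" where
  "ones = (\<chi> i. 1)"

definition diag_mat :: "'a::zero ^ 'n \<Rightarrow> 'a ^ 'n ^ 'n" where
  "diag_mat v = (\<chi> i j. if i = j then v $ i else 0)"

definition laplacian :: "real ^ 'n ^ 'n \<Rightarrow> real ^ 'n ^ 'n" where
  "laplacian A = diag_mat (A *v ones) - A"

definition adjacency_matrix :: "real ^ 'n ^ 'n \<Rightarrow> bool" where
  "adjacency_matrix A \<longleftrightarrow> (\<forall>i j. A $ i $ j \<in> {0, 1}) \<and> transpose A = A"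

definition skew_space :: "real ^ 'n ^ 'n \<Rightarrow> (complex ^ 'n ^ 'n) set" where
  "skew_space A = {M. transpose M = - M \<and> (\<forall>i j. A $ i $ j = 0 \<longrightarrow> M $ i $ j = 0)}"

definition frob_inner :: "complex ^ 'n ^ 'n \<Rightarrow> complex ^ 'n ^ 'n \<Rightarrow> complex" where
  "frob_inner M1 M2 = (\<Sum>i\<in>UNIV. \<Sum>j\<in>UNIV. cnj (M1 $ i $ j) * M2 $ i $ j)"

definition vec_inner :: "complex ^ 'n \<Rightarrow> complex ^ 'n \<Rightarrow> complex" where
  "vec_inner x y = (\<Sum>i\<in>UNIV. cnj (x $ i) * y $ i)"

definition LA :: "complex ^ 'n ^ 'n \<Rightarrow> complex ^ 'n" where
  "LA M = M *v ones"

definition is_LA_adjoint :: "real ^ 'n ^ 'n \<Rightarrow> (complex ^ 'n \<Rightarrow> complex ^ 'n ^ 'n) \<Rightarrow> bool" where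
  "is_LA_adjoint A Ld \<longleftrightarrow> (\<forall>v. Ld v \<in> skew_space A) \<and>
     (\<forall>M \<in> skew_space A. \<forall>v. vec_inner (LA M) v = frob_inner M (Ld v))"

definition complexify :: "real ^ 'n ^ 'n \<Rightarrow> complex ^ 'n ^ 'n" where
  "complexify B = (\<chi> i j. complex_of_real (B $ i $ j))"

end

theory Submission
  imports Defs
begin

(* The adjoint is explicit: (L\<^sup>\<dagger> v)_ij = A_ij (v_i - v_j) / 2. Skew-symmetry of M
   symmetrizes <M 1, v> = \<Sum> conj(M_ij) v_i into \<Sum> conj(M_ij) (v_i - v_j) / 2, and since M is
   supported on the 0/1 pattern of A the factor A_ij can be inserted for free. The adjoint is
   unique because the Frobenius form is definite on S_A. The i-th row sum of L\<^sup>\<dagger> v is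
   \<Sum>_j A_ij (v_i - v_j) / 2 = (d_i v_i - \<Sum>_j A_ij v_j) / 2 = (L v)_i / 2, d_i the degree of i. *)

definition LA_adjoint :: "real ^ 'n ^ 'n \<Rightarrow> complex ^ 'n \<Rightarrow> complex ^ 'n ^ 'n" where
  "LA_adjoint A v = (\<chi> i j. of_real (A $ i $ j) * (v $ i - v $ j) / 2)"

lemma transpose_component [simp]: "transpose M $ i $ j = M $ j $ i"
  by (simp add: transpose_def)

lemma transpose_diff: "transpose (M - N) = transpose M - transpose N"
  by (simp add: vec_eq_iff)

lemma skew_space_component:
  assumes "M \<in> skew_space A"
  shows "M $ j $ i = - M $ i $ j"
proof -
  have "transpose M = - M"
    using assms by (simp add: skew_space_def)
  then have "transpose M $ i $ j = (- M) $ i $ j"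
    by simp
  then show ?thesis
    by simp
qed

lemma skew_space_diff: "M \<in> skew_space A \<Longrightarrow> N \<in> skew_space A \<Longrightarrow> M - N \<in> skew_space A"
  by (simp add: skew_space_def transpose_diff)

lemma frob_inner_diff_right: "frob_inner D (M - N) = frob_inner D M - frob_inner D N"
  unfolding frob_inner_def by (simp add: right_diff_distrib sum_subtractf)

lemma frob_inner_self_eq_0_iff: "frob_inner D D = 0 \<longleftrightarrow> D = 0"
proof
  assume "frob_inner D D = 0"
  moreover have "frob_inner D D = of_real (\<Sum>i\<in>UNIV. \<Sum>j\<in>UNIV. (cmod (D $ i $ j))\<^sup>2)"
    unfolding frob_inner_def of_real_sum complex_norm_square
    by (simp add: mult.commute)
  ultimately have "(\<Sum>i\<in>UNIV. \<Sum>j\<in>UNIV. (cmod (D $ i $ j))\<^sup>2) = 0"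
    by (metis of_real_eq_0_iff)
  then show "D = 0"
    by (simp add: sum_nonneg_eq_0_iff sum_nonneg vec_eq_iff)
qed (simp add: frob_inner_def)

lemma is_LA_adjoint_unique:
  assumes "is_LA_adjoint A Ld" and "is_LA_adjoint A Ld'"
  shows "Ld = Ld'"
proof
  fix v
  let ?D = "Ld v - Ld' v"
  have "?D \<in> skew_space A"
    using assms by (simp add: is_LA_adjoint_def skew_space_diff)
  then have "frob_inner ?D (Ld v) = frob_inner ?D (Ld' v)"
    using assms unfolding is_LA_adjoint_def by metis
  then have "frob_inner ?D ?D = 0"
    by (simp add: frob_inner_diff_right)
  then show "Ld v = Ld' v"
    by (simp add: frob_inner_self_eq_0_iff)
qed

lemma vec_inner_LA_skew:
  assumes "M \<in> skew_space A"
  shows "vec_inner (LA M) v = (\<Sum>i\<in>UNIV. \<Sum>j\<in>UNIV. cnj (M $ i $ j) * (v $ i - v $ j)) / 2"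
proof -
  define S where "S = (\<Sum>i\<in>UNIV. \<Sum>j\<in>UNIV. cnj (M $ i $ j) * v $ i)"
  have "vec_inner (LA M) v = S"
    by (simp add: S_def vec_inner_def LA_def ones_def matrix_vector_mult_def sum_distrib_right)
  moreover have "(\<Sum>i\<in>UNIV. \<Sum>j\<in>UNIV. cnj (M $ i $ j) * v $ j) = - S"
  proof -
    have "(\<Sum>i\<in>UNIV. \<Sum>j\<in>UNIV. cnj (M $ i $ j) * v $ j)
        = (\<Sum>j\<in>UNIV. \<Sum>i\<in>UNIV. cnj (M $ i $ j) * v $ j)"
      by (rule sum.swap)
    also have "\<dots> = - S"
    proof -
      have "cnj (M $ i $ j) * v $ j = - (cnj (M $ j $ i) * v $ j)" for i j
      proof -
        have "M $ i $ j = - M $ j $ i"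
          by (rule skew_space_component[OF assms])
        then show ?thesis
          by simp
      qed
      then show ?thesis
        by (simp add: S_def sum_negf)
    qed
    finally show ?thesis .
  qed
  ultimately show ?thesis
    by (simp add: S_def right_diff_distrib sum_subtractf)
qed

lemma LA_adjoint_in_skew_space:
  assumes "transpose A = A"
  shows "LA_adjoint A v \<in> skew_space A"
proof -
  have "A $ j $ i = A $ i $ j" for i j
    by (metis assms transpose_component)
  then show ?thesis
    by (simp add: skew_space_def LA_adjoint_def vec_eq_iff field_simps)
qed

lemma frob_inner_LA_adjoint:
  assumes "adjacency_matrix A" and "M \<in> skew_space A"
  shows "frob_inner M (LA_adjoint A v)
    = (\<Sum>i\<in>UNIV. \<Sum>j\<in>UNIV. cnj (M $ i $ j) * (v $ i - v $ j)) / 2"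
proof -
  have support: "cnj (M $ i $ j) * of_real (A $ i $ j) = cnj (M $ i $ j)" for i j
  proof -
    have "A $ i $ j \<in> {0, 1}"
      using assms(1) by (simp add: adjacency_matrix_def)
    then show ?thesis
      using assms(2) by (auto simp: skew_space_def)
  qed
  show ?thesis
    unfolding frob_inner_def LA_adjoint_def
    by (simp add: sum_divide_distrib mult.assoc[symmetric] support)
qed

lemma is_LA_adjoint_LA_adjoint:
  assumes "adjacency_matrix A"
  shows "is_LA_adjoint A (LA_adjoint A)"
  unfolding is_LA_adjoint_def
proof (intro conjI ballI allI)
  show "LA_adjoint A v \<in> skew_space A" for v
    using assms by (simp add: adjacency_matrix_def LA_adjoint_in_skew_space)
  show "vec_inner (LA M) v = frob_inner M (LA_adjoint A v)" if "M \<in> skew_space A" for M v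
    using assms that by (simp add: vec_inner_LA_skew frob_inner_LA_adjoint)
qed

lemma LA_LA_adjoint: "LA (LA_adjoint A v) = complexify ((1/2) *\<^sub>R laplacian A) *v v"
  unfolding vec_eq_iff
proof
  fix i
  have entry: "complexify ((1/2) *\<^sub>R laplacian A) $ i $ j * v $ j
      = (if j = i then of_real (\<Sum>k\<in>UNIV. A $ i $ k) * v $ i / 2 else 0)
        - of_real (A $ i $ j) * v $ j / 2" for j
    by (simp add: complexify_def laplacian_def diag_mat_def ones_def matrix_vector_mult_def
        field_simps)
  have "(complexify ((1/2) *\<^sub>R laplacian A) *v v) $ i
      = (of_real (\<Sum>k\<in>UNIV. A $ i $ k) * v $ i - (\<Sum>j\<in>UNIV. of_real (A $ i $ j) * v $ j)) / 2"
    by (simp add: matrix_vector_mult_def entry sum_subtractf sum_divide_distrib diff_divide_distrib)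
  also have "\<dots> = LA (LA_adjoint A v) $ i"
    by (simp add: LA_def LA_adjoint_def matrix_vector_mult_def ones_def right_diff_distrib
        sum_subtractf sum_divide_distrib sum_distrib_right diff_divide_distrib)
  finally show "LA (LA_adjoint A v) $ i = (complexify ((1/2) *\<^sub>R laplacian A) *v v) $ i" ..
qed

theorem lemma8:
  fixes A :: "real ^ 'n ^ 'n"
  assumes "adjacency_matrix A"
  shows "(\<exists>Ld. is_LA_adjoint A Ld) \<and>
         (\<forall>Ld. is_LA_adjoint A Ld \<longrightarrow>
            (\<forall>v. LA (Ld v) = complexify ((1/2) *\<^sub>R laplacian A) *v v))"
  using is_LA_adjoint_LA_adjoint[OF assms] is_LA_adjoint_unique LA_LA_adjoint by blast

end
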